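(* Let $G=(V,E,I,\{s,t\})$ be an inner Eulerian grapht with $|E|\le\omega$ in which $s$ is linked. Then there is a linkage $\mathcal{P}$ of $s$ such that there is a family of pairwise edge-disjoint cycles in $G-E(\mathcal{P})$ covering $\delta_{G-E(\mathcal{P})}(t)$.
   Context: Graphs may have parallel edges but no loops; all paths finite. With terminal set $\{s,t\}$, the grapht is inner Eulerian if no $X\subseteq V\setminus\{s,t\}$ has the number of edges with exactly one end in $X$ equal to an odd natural number. $\delta(x)$ is the set of edges at $x$. A system of edge-disjoint $st$-paths links $s$ if it covers $\delta(s)$; $s$ is linked if such a system exists; a linkage of $s$ is a system linking $s$ in which each path contains an edge of $\delta(s)$. $E(\mathcal{P})$ is the union of edge sets of paths in $\mathcal{P}$. *)

theory Defs
  imports Main "HOL-Library.Countable_Set"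
begin

text \<open>Parallel edges are allowed since distinct edges may have the same ends.\<close>

definition multigraph :: "'v set \<Rightarrow> 'e set \<Rightarrow> ('e \<Rightarrow> 'v set) \<Rightarrow> bool" where
  "multigraph V E I \<longleftrightarrow> (\<forall>e\<in>E. I e \<subseteq> V \<and> card (I e) = 2)"

definition cut_edges :: "'e set \<Rightarrow> ('e \<Rightarrow> 'v set) \<Rightarrow> 'v set \<Rightarrow> 'e set" where
  "cut_edges E I X = {e \<in> E. card (I e \<inter> X) = 1}"

definition delta :: "'e set \<Rightarrow> ('e \<Rightarrow> 'v set) \<Rightarrow> 'v \<Rightarrow> 'e set" where
  "delta E I x = {e \<in> E. x \<in> I e}"

definition inner_eulerian :: "'v set \<Rightarrow> 'e set \<Rightarrow> ('e \<Rightarrow> 'v set) \<Rightarrow> 'v \<Rightarrow> 'v \<Rightarrow> bool" where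
  "inner_eulerian V E I s t \<longleftrightarrow>
     (\<forall>X. X \<subseteq> V - {s, t} \<longrightarrow> \<not> (finite (cut_edges E I X) \<and> odd (card (cut_edges E I X))))"

definition is_path :: "'e set \<Rightarrow> ('e \<Rightarrow> 'v set) \<Rightarrow> 'v list \<times> 'e list \<Rightarrow> bool" where
  "is_path E I P \<longleftrightarrow> (case P of (vs, es) \<Rightarrow>
      length vs = Suc (length es) \<and> distinct vs \<and>
      (\<forall>i < length es. es ! i \<in> E \<and> I (es ! i) = {vs ! i, vs ! Suc i}))"

definition st_path :: "'e set \<Rightarrow> ('e \<Rightarrow> 'v set) \<Rightarrow> 'v \<Rightarrow> 'v \<Rightarrow> 'v list \<times> 'e list \<Rightarrow> bool" where
  "st_path E I s t P \<longleftrightarrow> is_path E I P \<and> hd (fst P) = s \<and> last (fst P) = t"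

definition path_edges :: "'v list \<times> 'e list \<Rightarrow> 'e set" where
  "path_edges P = set (snd P)"

definition system_edges :: "('v list \<times> 'e list) set \<Rightarrow> 'e set" where
  "system_edges \<P> = (\<Union>P\<in>\<P>. path_edges P)"

definition edge_disjoint_st_system ::
  "'e set \<Rightarrow> ('e \<Rightarrow> 'v set) \<Rightarrow> 'v \<Rightarrow> 'v \<Rightarrow> ('v list \<times> 'e list) set \<Rightarrow> bool" where
  "edge_disjoint_st_system E I s t \<P> \<longleftrightarrow>
     (\<forall>P\<in>\<P>. st_path E I s t P) \<and>
     (\<forall>P\<in>\<P>. \<forall>Q\<in>\<P>. P \<noteq> Q \<longrightarrow> path_edges P \<inter> path_edges Q = {})"

definition system_links ::
  "'e set \<Rightarrow> ('e \<Rightarrow> 'v set) \<Rightarrow> 'v \<Rightarrow> 'v \<Rightarrow> ('v list \<times> 'e list) set \<Rightarrow> bool" where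
  "system_links E I s t \<P> \<longleftrightarrow>
     edge_disjoint_st_system E I s t \<P> \<and> delta E I s \<subseteq> system_edges \<P>"

definition is_linked :: "'e set \<Rightarrow> ('e \<Rightarrow> 'v set) \<Rightarrow> 'v \<Rightarrow> 'v \<Rightarrow> bool" where
  "is_linked E I s t \<longleftrightarrow> (\<exists>\<P>. system_links E I s t \<P>)"

definition linkage ::
  "'e set \<Rightarrow> ('e \<Rightarrow> 'v set) \<Rightarrow> 'v \<Rightarrow> 'v \<Rightarrow> ('v list \<times> 'e list) set \<Rightarrow> bool" where
  "linkage E I s t \<P> \<longleftrightarrow>
     system_links E I s t \<P> \<and> (\<forall>P\<in>\<P>. path_edges P \<inter> delta E I s \<noteq> {})"

text \<open>C is (the edge set of) a cycle in the graph with edge set E: a closed walk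
  v_0 e_0 v_1 ... v_{n-1} e_{n-1} v_0 with n \<ge> 2, distinct vertices and distinct edges
  (n = 2 gives a cycle formed by two parallel edges).\<close>
definition is_cycle :: "'e set \<Rightarrow> ('e \<Rightarrow> 'v set) \<Rightarrow> 'e set \<Rightarrow> bool" where
  "is_cycle E I C \<longleftrightarrow> (\<exists>vs es.
      length vs = length es \<and> 2 \<le> length es \<and> distinct vs \<and> distinct es \<and>
      (\<forall>i < length es. es ! i \<in> E \<and>
         I (es ! i) = {vs ! i, vs ! ((Suc i) mod (length vs))}) \<and>
      set es = C)"

end

theory Submission
  imports Defs
begin

text \<open>Enumerate \<open>E\<close> as \<open>x\<^sub>0, x\<^sub>1, \<dots>\<close> and build increasing families of edge-disjoint
  \<open>st\<close>-paths and cycles, keeping the residual graph \<open>H\<close> inner Eulerian with \<open>s\<close> linked in it;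
  step \<open>n\<close> puts \<open>x\<^sub>n\<close> on a new path if it is at \<open>s\<close>, and on a new path or cycle if it is at
  \<open>t\<close>. Removing an \<open>st\<close>-path or a cycle keeps \<open>H\<close> inner Eulerian, since it meets every cut
  \<open>\<delta>(X)\<close> with \<open>X \<subseteq> V - {s, t}\<close> in an even number of edges.

  To absorb an edge \<open>x\<close>, take a system \<open>R\<close> linking \<open>s\<close> in \<open>H\<close>. If \<open>x\<close> lies on a path of \<open>R\<close>,
  take that path. Otherwise \<open>x = ut\<close> with \<open>u \<noteq> s\<close>; let \<open>X\<close> be the set of vertices joined to \<open>u\<close>
  in \<open>H - E(R) - x\<close>. If \<open>t \<in> X\<close>, the connecting path closes up with \<open>x\<close> to a cycle. If not,
  then \<open>X \<subseteq> V - {s, t}\<close>, and since \<open>H\<close> is inner Eulerian the cut of \<open>X\<close> in \<open>H\<close> cannot be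
  just \<open>{x}\<close>: some path \<open>Q\<close> of \<open>R\<close> enters \<open>X\<close>. Follow \<open>Q\<close> up to \<open>X\<close>, go to \<open>u\<close> inside \<open>X\<close> and
  along \<open>x\<close> to \<open>t\<close>; the new path keeps the only edge of \<open>Q\<close> at \<open>s\<close>, so \<open>R - {Q}\<close> still links
  \<open>s\<close> in what remains.\<close>

section \<open>Paths and cycles\<close>

lemma multigraph_edge_ends:
  assumes "multigraph V E I" "e \<in> E"
  obtains p q where "I e = {p, q}" "p \<noteq> q" "p \<in> V" "q \<in> V"
proof -
  have "card (I e) = 2" "I e \<subseteq> V" using assms unfolding multigraph_def by auto
  then show ?thesis using that by (auto simp: card_2_iff)
qed

lemma multigraph_other_end:
  assumes "multigraph V E I" "e \<in> E" "t \<in> I e"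
  obtains u where "I e = {u, t}" "u \<noteq> t" "u \<in> V"
proof -
  obtain p q where pq: "I e = {p, q}" "p \<noteq> q" "p \<in> V" "q \<in> V"
    using multigraph_edge_ends[OF assms(1,2)] .
  show ?thesis
  proof (cases "t = p")
    case True then show ?thesis using that[of q] pq by (simp add: insert_commute)
  next
    case False
    then have "t = q" using pq assms(3) by auto
    then show ?thesis using that[of p] pq by simp
  qed
qed

lemma path_edges_subset: "is_path A I P \<Longrightarrow> path_edges P \<subseteq> A"
  unfolding is_path_def path_edges_def by (auto split: prod.splits simp: in_set_conv_nth)

lemma is_path_restrict: "is_path A I P \<Longrightarrow> path_edges P \<subseteq> B \<Longrightarrow> is_path B I P"
  unfolding is_path_def path_edges_def by (auto split: prod.splits)

lemma st_path_edges_subset: "st_path A I s t P \<Longrightarrow> path_edges P \<subseteq> A"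
  unfolding st_path_def using path_edges_subset by blast

lemma st_path_restrict: "st_path A I s t P \<Longrightarrow> path_edges P \<subseteq> B \<Longrightarrow> st_path B I s t P"
  unfolding st_path_def using is_path_restrict by blast

lemma is_cycle_subset: "is_cycle A I c \<Longrightarrow> c \<subseteq> A"
  unfolding is_cycle_def by (auto simp: in_set_conv_nth)

lemma is_cycle_restrict: "is_cycle A I c \<Longrightarrow> c \<subseteq> B \<Longrightarrow> is_cycle B I c"
  unfolding is_cycle_def by (metis nth_mem subsetD)

lemma is_path_distinct_edges:
  assumes "is_path A I (vs, es)"
  shows "distinct es"
proof -
  have L: "length vs = Suc (length es)" "distinct vs"
    and E: "\<And>i. i < length es \<Longrightarrow> I (es ! i) = {vs ! i, vs ! Suc i}"
    using assms unfolding is_path_def by auto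
  show ?thesis unfolding distinct_conv_nth
  proof (intro allI impI)
    fix i j assume ij: "i < length es" "j < length es" "i \<noteq> j"
    show "es ! i \<noteq> es ! j"
    proof
      assume "es ! i = es ! j"
      then have "{vs ! i, vs ! Suc i} = {vs ! j, vs ! Suc j}" using E ij by metis
      then show False using ij L by (auto simp: doubleton_eq_iff nth_eq_iff_index_eq)
    qed
  qed
qed

lemma is_path_edge_at_hd:
  assumes "is_path A I (vs, es)" "e \<in> set es" "hd vs \<in> I e"
  shows "e = es ! 0"
proof -
  have L: "length vs = Suc (length es)" "distinct vs"
    and E: "\<And>i. i < length es \<Longrightarrow> I (es ! i) = {vs ! i, vs ! Suc i}"
    using assms unfolding is_path_def by auto
  obtain i where i: "i < length es" "e = es ! i" using assms(2) by (auto simp: in_set_conv_nth)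
  have "hd vs = vs ! 0" using L by (cases vs) auto
  moreover have "hd vs = vs ! i \<or> hd vs = vs ! Suc i" using E[OF i(1)] assms(3) i(2) by auto
  ultimately have "i = 0" using L i by (auto simp: nth_eq_iff_index_eq)
  then show ?thesis using i by simp
qed

lemma st_path_meets_delta:
  assumes "st_path A I s t P" "s \<noteq> t"
  shows "path_edges P \<inter> delta A I s \<noteq> {}"
proof -
  obtain vs es where P: "P = (vs, es)" by (cases P)
  have L: "length vs = Suc (length es)" "hd vs = s" "last vs = t"
    and E: "\<And>i. i < length es \<Longrightarrow> es ! i \<in> A \<and> I (es ! i) = {vs ! i, vs ! Suc i}"
    using assms unfolding is_path_def st_path_def P by auto
  have "es \<noteq> []" using L assms(2) by (cases vs) auto
  moreover have "vs ! 0 = s" using L by (cases vs) auto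
  ultimately have "es ! 0 \<in> path_edges P \<inter> delta A I s"
    using E[of 0] unfolding P path_edges_def delta_def by auto
  then show ?thesis by blast
qed

lemma is_path_take:
  "is_path A I (vs, es) \<Longrightarrow> k < length vs \<Longrightarrow> is_path A I (take (Suc k) vs, take k es)"
  unfolding is_path_def by auto

lemma is_path_drop:
  "is_path A I (vs, es) \<Longrightarrow> k < length vs \<Longrightarrow> is_path A I (drop k vs, drop k es)"
  unfolding is_path_def by auto

lemma is_path_Cons:
  assumes "is_path A I (vs, es)" "w \<notin> set vs" "e \<in> A" "I e = {w, hd vs}"
  shows "is_path A I (w # vs, e # es)"
proof -
  have "length vs = Suc (length es)" using assms unfolding is_path_def by auto
  then have "hd vs = vs ! 0" by (cases vs) auto
  then show ?thesis using assms unfolding is_path_def by (auto simp: nth_Cons split: nat.splits)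
qed

lemma is_path_append:
  assumes "is_path A I (vs1, es1)" "is_path B I (vs2, es2)" "last vs1 = hd vs2"
    "distinct (butlast vs1 @ vs2)"
  shows "is_path (A \<union> B) I (butlast vs1 @ vs2, es1 @ es2)"
proof -
  have L1: "length vs1 = Suc (length es1)"
    and E1: "\<And>i. i < length es1 \<Longrightarrow> es1 ! i \<in> A \<and> I (es1 ! i) = {vs1 ! i, vs1 ! Suc i}"
    using assms(1) unfolding is_path_def by auto
  have L2: "length vs2 = Suc (length es2)"
    and E2: "\<And>i. i < length es2 \<Longrightarrow> es2 ! i \<in> B \<and> I (es2 ! i) = {vs2 ! i, vs2 ! Suc i}"
    using assms(2) unfolding is_path_def by auto
  let ?vs = "butlast vs1 @ vs2"
  have lb: "length (butlast vs1) = length es1" using L1 by simp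
  have left: "?vs ! i = vs1 ! i" if "i \<le> length es1" for i
  proof (cases "i < length es1")
    case True then show ?thesis using L1 by (simp add: nth_append nth_butlast)
  next
    case False
    then have "i = length es1" using that by simp
    moreover have "vs1 \<noteq> []" "vs2 \<noteq> []" using L1 L2 by auto
    ultimately show ?thesis using assms(3) L1 lb last_conv_nth[of vs1] hd_conv_nth[of vs2]
      by (simp add: nth_append)
  qed
  have "(es1 @ es2) ! i \<in> A \<union> B \<and> I ((es1 @ es2) ! i) = {?vs ! i, ?vs ! Suc i}"
    if i: "i < length (es1 @ es2)" for i
  proof (cases "i < length es1")
    case True then show ?thesis using E1[OF True] left[of i] left[of "Suc i"] by (simp add: nth_append)
  next
    case False
    then obtain k where k: "i = length es1 + k" "k < length es2" using i
      by (metis add_diff_inverse_nat length_append nat_add_left_cancel_less)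
    show ?thesis using E2[OF k(2)] k lb by (simp add: nth_append)
  qed
  moreover have "length ?vs = Suc (length (es1 @ es2))" using L1 L2 by simp
  ultimately show ?thesis using assms(4) unfolding is_path_def by simp
qed

lemma is_path_snoc:
  assumes P: "is_path A I (vs, es)" and "last vs = u" "I x = {u, t}" "t \<notin> set vs"
  shows "is_path (A \<union> {x}) I (vs @ [t], es @ [x])"
proof -
  have "vs \<noteq> []" using P unfolding is_path_def by auto
  then have "u \<noteq> t" using assms(2,4) by auto
  then have edge: "is_path {x} I ([u, t], [x])" using assms(3) unfolding is_path_def by auto
  have join: "butlast vs @ [u, t] = vs @ [t]"
    using assms(2) \<open>vs \<noteq> []\<close> by (metis append_butlast_last_id append.assoc append_Cons append_Nil)
  have "distinct (vs @ [t])" using P assms(4) unfolding is_path_def by auto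
  then show ?thesis using is_path_append[OF P edge] assms(2) unfolding join by simp
qed

lemma is_path_vertex_in_cut:
  assumes "is_path A I (vs, es)" "e \<in> set es" "card (I e \<inter> X) = 1"
  obtains v where "v \<in> set vs" "v \<in> X"
proof -
  obtain i where i: "i < length es" "es ! i = e" using assms(2) by (auto simp: in_set_conv_nth)
  have L: "length vs = Suc (length es)" and "I e = {vs ! i, vs ! Suc i}"
    using assms(1) i unfolding is_path_def by auto
  have "vs ! i \<in> X \<or> vs ! Suc i \<in> X"
  proof (rule ccontr)
    assume "\<not> ?thesis"
    then have "I e \<inter> X = {}" using \<open>I e = {vs ! i, vs ! Suc i}\<close> by auto
    then show False using assms(3) by simp
  qed
  moreover have "vs ! i \<in> set vs" "vs ! Suc i \<in> set vs" using i(1) L by simp_all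
  ultimately show ?thesis using that by blast
qed

lemma is_cycle_close_path:
  assumes "is_path A I (ws, fs)" "hd ws = t" "last ws = u" "u \<noteq> t" "x \<notin> set fs" "I x = {u, t}"
  shows "is_cycle (A \<union> {x}) I (insert x (set fs))"
proof -
  have LW: "length ws = Suc (length fs)" "distinct ws"
    and E: "\<And>i. i < length fs \<Longrightarrow> fs ! i \<in> A \<and> I (fs ! i) = {ws ! i, ws ! Suc i}"
    using assms(1) unfolding is_path_def by auto
  have "fs \<noteq> []" using LW assms(2,3,4) by (cases ws) auto
  have w0: "ws ! 0 = t" using assms(2) LW by (cases ws) auto
  have wl: "ws ! length fs = u" using assms(3) LW last_conv_nth[of ws] by fastforce
  have "(fs @ [x]) ! i \<in> A \<union> {x} \<and> I ((fs @ [x]) ! i) = {ws ! i, ws ! (Suc i mod length ws)}"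
    if "i < length (fs @ [x])" for i
  proof (cases "i < length fs")
    case True then show ?thesis using E[OF True] LW by (simp add: nth_append)
  next
    case False
    then have "i = length fs" using that by simp
    then show ?thesis using LW w0 wl assms(6) by (simp add: nth_append insert_commute)
  qed
  moreover have "distinct (fs @ [x])" using is_path_distinct_edges[OF assms(1)] assms(5) by simp
  moreover have "length ws = length (fs @ [x])" "2 \<le> length (fs @ [x])"
    using LW \<open>fs \<noteq> []\<close> by (auto simp: Suc_le_eq)
  moreover have "set (fs @ [x]) = insert x (set fs)" by simp
  ultimately show ?thesis unfolding is_cycle_def using LW(2) by blast
qed

section \<open>Parity of cuts\<close>

lemma card_Int_doubleton_eq_1:
  "a \<noteq> b \<Longrightarrow> card ({a, b} \<inter> X) = 1 \<longleftrightarrow> (a \<in> X) \<noteq> (b \<in> X)"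
  by (cases "a \<in> X"; cases "b \<in> X") auto

lemma even_card_crossings:
  "even (card {i. i < n \<and> (w i \<in> X) \<noteq> (w (Suc i) \<in> X)}) \<longleftrightarrow> (w 0 \<in> X) = (w n \<in> X)"
proof (induction n)
  case (Suc n)
  let ?P = "\<lambda>i. (w i \<in> X) \<noteq> (w (Suc i) \<in> X)"
  have "{i. i < Suc n \<and> ?P i} = (if ?P n then insert n {i. i < n \<and> ?P i} else {i. i < n \<and> ?P i})"
    by (auto simp: less_Suc_eq)
  then show ?case using Suc by (cases "?P n") auto
qed simp

lemma trail_cut_parity:
  assumes "distinct es"
    and "\<And>i. i < length es \<Longrightarrow> I (es ! i) = {w i, w (Suc i)} \<and> w i \<noteq> w (Suc i)"
  shows "finite (cut_edges (set es) I X) \<and>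
    (even (card (cut_edges (set es) I X)) \<longleftrightarrow> (w 0 \<in> X) = (w (length es) \<in> X))"
proof -
  let ?S = "{i. i < length es \<and> (w i \<in> X) \<noteq> (w (Suc i) \<in> X)}"
  have cross: "card (I (es ! i) \<inter> X) = 1 \<longleftrightarrow> (w i \<in> X) \<noteq> (w (Suc i) \<in> X)"
    if "i < length es" for i
    using assms(2)[OF that] card_Int_doubleton_eq_1[of "w i" "w (Suc i)" X] by simp
  have "cut_edges (set es) I X = (!) es ` ?S"
  proof (intro equalityI subsetI)
    fix e assume "e \<in> cut_edges (set es) I X"
    then obtain i where "i < length es" "e = es ! i" "card (I e \<inter> X) = 1"
      unfolding cut_edges_def by (auto simp: in_set_conv_nth)
    then show "e \<in> (!) es ` ?S" using cross by auto
  next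
    fix e assume "e \<in> (!) es ` ?S"
    then show "e \<in> cut_edges (set es) I X" using cross unfolding cut_edges_def by auto
  qed
  moreover have "inj_on ((!) es) ?S" using inj_on_nth[OF assms(1), of ?S] by simp
  ultimately have "card (cut_edges (set es) I X) = card ?S" by (simp add: card_image)
  moreover have "finite (cut_edges (set es) I X)" unfolding cut_edges_def by simp
  ultimately show ?thesis using even_card_crossings[of "length es" w X] by simp
qed

lemma st_path_even_cut:
  assumes "st_path A I s t P" "s \<notin> X" "t \<notin> X"
  shows "finite (cut_edges (path_edges P) I X) \<and> even (card (cut_edges (path_edges P) I X))"
proof -
  obtain vs es where P: "P = (vs, es)" by (cases P)
  have L: "length vs = Suc (length es)" "distinct vs" "hd vs = s" "last vs = t"
    and E: "\<And>i. i < length es \<Longrightarrow> I (es ! i) = {vs ! i, vs ! Suc i}"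
    using assms unfolding is_path_def st_path_def P by auto
  have "distinct es" using assms is_path_distinct_edges unfolding st_path_def P by blast
  moreover have "I (es ! i) = {vs ! i, vs ! Suc i} \<and> vs ! i \<noteq> vs ! Suc i" if "i < length es" for i
    using that E L by (simp add: nth_eq_iff_index_eq)
  ultimately have "finite (cut_edges (set es) I X) \<and>
      (even (card (cut_edges (set es) I X)) \<longleftrightarrow> (vs ! 0 \<in> X) = (vs ! length es \<in> X))"
    by (rule trail_cut_parity)
  moreover have "vs ! 0 = s" using L by (cases vs) auto
  moreover have "vs ! length es = t" using L last_conv_nth[of vs] by fastforce
  ultimately show ?thesis using assms P by (simp add: path_edges_def)
qed

lemma is_cycle_even_cut:
  assumes "is_cycle A I c"
  shows "finite (cut_edges c I X) \<and> even (card (cut_edges c I X))"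
proof -
  obtain vs es where L: "length vs = length es" "2 \<le> length es" "distinct vs" "distinct es"
    and E: "\<And>i. i < length es \<Longrightarrow> I (es ! i) = {vs ! i, vs ! (Suc i mod length vs)}"
    and c: "set es = c"
    using assms unfolding is_cycle_def by blast
  let ?w = "\<lambda>i. vs ! (i mod length vs)"
  have "I (es ! i) = {?w i, ?w (Suc i)} \<and> ?w i \<noteq> ?w (Suc i)" if i: "i < length es" for i
  proof -
    have "i \<noteq> Suc i mod length vs"
    proof (cases "Suc i < length vs")
      case False
      then have "Suc i = length vs" using i L by simp
      then show ?thesis using L by simp
    qed simp
    moreover have "Suc i mod length vs < length vs" using L by (intro mod_less_divisor) linarith
    ultimately show ?thesis using E[OF i] L i by (simp add: nth_eq_iff_index_eq)
  qed
  from trail_cut_parity[OF L(4), of I ?w, OF this]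
  show ?thesis using L c by simp
qed

lemma inner_eulerian_Diff:
  assumes "inner_eulerian V H I s t" "B \<subseteq> H"
    and "\<And>X. X \<subseteq> V - {s, t} \<Longrightarrow> finite (cut_edges B I X) \<and> even (card (cut_edges B I X))"
  shows "inner_eulerian V (H - B) I s t"
  unfolding inner_eulerian_def
proof (intro allI impI notI)
  fix X assume X: "X \<subseteq> V - {s, t}" and odd: "finite (cut_edges (H - B) I X) \<and> odd (card (cut_edges (H - B) I X))"
  have "cut_edges H I X = cut_edges (H - B) I X \<union> cut_edges B I X"
    "cut_edges (H - B) I X \<inter> cut_edges B I X = {}"
    using assms(2) unfolding cut_edges_def by auto
  then have "finite (cut_edges H I X) \<and> odd (card (cut_edges H I X))"
    using odd assms(3)[OF X] by (simp add: card_Un_disjoint)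
  then show False using assms(1) X unfolding inner_eulerian_def by blast
qed

section \<open>Reachability\<close>

definition reach :: "'e set \<Rightarrow> ('e \<Rightarrow> 'v set) \<Rightarrow> 'v \<Rightarrow> 'v set" where
  "reach A I u = {a. \<exists>ws fs. is_path A I (ws, fs) \<and> hd ws = a \<and> last ws = u}"

lemma reach_refl: "u \<in> reach A I u"
  unfolding reach_def by (rule CollectI, rule exI[of _ "[u]"], rule exI[of _ "[]"]) (simp add: is_path_def)

lemma reach_path_within:
  assumes "a \<in> reach A I u"
  shows "\<exists>ws fs. is_path A I (ws, fs) \<and> hd ws = a \<and> last ws = u \<and> set ws \<subseteq> reach A I u"
proof -
  obtain ws fs where W: "is_path A I (ws, fs)" "hd ws = a" "last ws = u"
    using assms unfolding reach_def by blast
  have "set ws \<subseteq> reach A I u"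
  proof
    fix w assume "w \<in> set ws"
    then obtain k where k: "k < length ws" "ws ! k = w" by (auto simp: in_set_conv_nth)
    have "is_path A I (drop k ws, drop k fs)" using W(1) k(1) by (rule is_path_drop)
    moreover have "hd (drop k ws) = w" using k by (simp add: hd_drop_conv_nth)
    moreover have "last (drop k ws) = u" using k W(3) by simp
    ultimately show "w \<in> reach A I u" unfolding reach_def by blast
  qed
  with W show ?thesis by blast
qed

lemma reach_edge:
  assumes "a \<in> reach A I u" "e \<in> A" "I e = {w, a}"
  shows "w \<in> reach A I u"
proof -
  obtain ws fs where W: "is_path A I (ws, fs)" "hd ws = a" "last ws = u" "set ws \<subseteq> reach A I u"
    using reach_path_within[OF assms(1)] by blast
  show ?thesis
  proof (cases "w \<in> set ws")
    case True then show ?thesis using W(4) by blast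
  next
    case False
    have "is_path A I (w # ws, e # fs)" using is_path_Cons[OF W(1) False assms(2)] W(2) assms(3) by simp
    moreover have "ws \<noteq> []" using W(1) unfolding is_path_def by auto
    then have "hd (w # ws) = w" "last (w # ws) = u" using W(3) by simp_all
    ultimately show ?thesis unfolding reach_def by blast
  qed
qed

lemma reach_delta:
  assumes "a \<in> reach A I u" "a \<noteq> u"
  shows "delta A I a \<noteq> {}"
proof -
  obtain ws fs where W: "is_path A I (ws, fs)" "hd ws = a" "last ws = u"
    using assms(1) unfolding reach_def by blast
  have L: "length ws = Suc (length fs)"
    and E: "\<And>i. i < length fs \<Longrightarrow> fs ! i \<in> A \<and> I (fs ! i) = {ws ! i, ws ! Suc i}"
    using W(1) unfolding is_path_def by auto
  have "fs \<noteq> []" using L W assms(2) by (cases ws) auto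
  moreover have "ws ! 0 = a" using W(2) L by (cases ws) auto
  ultimately have "fs ! 0 \<in> delta A I a" using E[of 0] unfolding delta_def by auto
  then show ?thesis by blast
qed

lemma reach_subset:
  assumes "multigraph V A I" "u \<in> V"
  shows "reach A I u \<subseteq> V"
proof
  fix a assume a: "a \<in> reach A I u"
  show "a \<in> V"
  proof (cases "a = u")
    case False
    then obtain e where "e \<in> A" "a \<in> I e" using reach_delta[OF a] unfolding delta_def by blast
    then show ?thesis using assms(1) unfolding multigraph_def by blast
  qed (use assms(2) in simp)
qed

lemma cut_edges_reach:
  assumes "multigraph V A I"
  shows "cut_edges A I (reach A I u) = {}"
proof -
  have "card (I e \<inter> reach A I u) \<noteq> 1" if e: "e \<in> A" for e
  proof -
    obtain p q where pq: "I e = {p, q}" "p \<noteq> q"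
      using multigraph_edge_ends[OF assms e] by blast
    have "q \<in> reach A I u" if "p \<in> reach A I u"
      using reach_edge[OF that e, of q] pq(1) by (simp add: insert_commute)
    moreover have "p \<in> reach A I u" if "q \<in> reach A I u"
      using reach_edge[OF that e, of p] pq(1) by simp
    ultimately have "p \<in> reach A I u \<longleftrightarrow> q \<in> reach A I u" by blast
    then show ?thesis using card_Int_doubleton_eq_1[OF pq(2)] pq(1) by simp
  qed
  then show ?thesis unfolding cut_edges_def by blast
qed

lemma reach_crossed:
  assumes "multigraph V H I" "inner_eulerian V H I s t"
    and "x \<in> H - B" "I x = {u, t}"
    and X: "reach (H - B - {x}) I u \<subseteq> V - {s, t}"
  shows "\<exists>e\<in>B \<inter> H. card (I e \<inter> reach (H - B - {x}) I u) = 1"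
proof (rule ccontr)
  let ?X = "reach (H - B - {x}) I u"
  assume none: "\<not> ?thesis"
  have "multigraph V (H - B - {x}) I" using assms(1) unfolding multigraph_def by blast
  then have no_cut: "cut_edges (H - B - {x}) I ?X = {}" by (rule cut_edges_reach)
  have "cut_edges H I ?X \<subseteq> {x}"
  proof
    fix e assume e: "e \<in> cut_edges H I ?X"
    then have "e \<notin> B" using none unfolding cut_edges_def by blast
    then show "e \<in> {x}" using e no_cut unfolding cut_edges_def by blast
  qed
  moreover have "I x \<inter> ?X = {u}" using assms(4) X reach_refl[of u] by auto
  then have "x \<in> cut_edges H I ?X" using assms(3) unfolding cut_edges_def by simp
  ultimately have "cut_edges H I ?X = {x}" by blast
  then have "finite (cut_edges H I ?X) \<and> odd (card (cut_edges H I ?X))" by simp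
  then show False using assms(2) X unfolding inner_eulerian_def by blast
qed

section \<open>Rerouting a path\<close>

lemma is_path_first_entry:
  assumes "is_path A I (vs, es)" "hd vs \<notin> X" "v \<in> set vs" "v \<in> X"
  obtains j where "0 < j" "j < length vs" "vs ! j \<in> X" "set (take j vs) \<inter> X = {}"
proof -
  let ?P = "\<lambda>i. i < length vs \<and> vs ! i \<in> X"
  obtain j where j: "?P j" and least: "\<And>i. i < j \<Longrightarrow> \<not> ?P i"
    using assms(3,4) exists_least_iff[of ?P] by (metis in_set_conv_nth)
  have "vs \<noteq> []" using assms(3) by auto
  then have "0 < j" using j assms(2) by (cases j) (auto simp: hd_conv_nth)
  moreover have "set (take j vs) \<inter> X = {}"
    using least by (auto simp: in_set_conv_nth)
  ultimately show ?thesis using that j by blast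
qed

lemma st_path_reroute:
  assumes st: "st_path H I s t (vs, es)"
    and X: "s \<notin> reach A I u" "t \<notin> reach A I u" "v \<in> set vs" "v \<in> reach A I u"
    and x: "I x = {u, t}"
  shows "\<exists>Q. st_path (set es \<union> A \<union> {x}) I s t Q \<and> x \<in> path_edges Q \<and> es ! 0 \<in> path_edges Q"
proof -
  let ?X = "reach A I u"
  have pth: "is_path H I (vs, es)" and hd: "hd vs = s" and lst: "last vs = t"
    using st unfolding st_path_def by auto
  have L: "length vs = Suc (length es)" "distinct vs" using pth unfolding is_path_def by auto
  obtain j where j: "0 < j" "j < length vs" "vs ! j \<in> ?X" and before: "set (take j vs) \<inter> ?X = {}"
    using is_path_first_entry[OF pth _ X(3,4)] hd X(1) by blast
  obtain ws fs where W: "is_path A I (ws, fs)" "hd ws = vs ! j" "last ws = u" "set ws \<subseteq> ?X"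
    using reach_path_within[OF j(3)] by blast
  have "ws \<noteq> []" using W(1) unfolding is_path_def by auto
  have "butlast (take (Suc j) vs) = take j vs" "last (take (Suc j) vs) = hd ws"
    using j W(2) by (simp_all add: butlast_take take_Suc_conv_app_nth)
  moreover have "distinct (take j vs @ ws)"
    using L before W(4) W(1) unfolding is_path_def by auto
  ultimately have J1: "is_path (H \<union> A) I (take j vs @ ws, take j es @ fs)"
    using is_path_append[OF is_path_take[OF pth j(2)] W(1)] by simp
  have "t \<notin> set (take j vs)"
  proof
    assume "t \<in> set (take j vs)"
    moreover have "t \<in> set (drop j vs)" using lst j by (metis last_drop last_in_set drop_eq_Nil leD)
    ultimately show False using set_take_disj_set_drop_if_distinct[OF L(2), of j j] by blast
  qed
  then have "t \<notin> set (take j vs @ ws)" using W(4) X(2) by auto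
  moreover have "last (take j vs @ ws) = u" using W(3) \<open>ws \<noteq> []\<close> by simp
  ultimately have J: "is_path (H \<union> A \<union> {x}) I (take j vs @ ws @ [t], (take j es @ fs) @ [x])"
    using is_path_snoc[OF J1 _ x] by simp
  let ?Q = "(take j vs @ ws @ [t], (take j es @ fs) @ [x])"
  have "path_edges ?Q \<subseteq> set es \<union> A \<union> {x}"
    using path_edges_subset[OF W(1)] set_take_subset[of j es] by (auto simp: path_edges_def)
  then have "is_path (set es \<union> A \<union> {x}) I ?Q" by (rule is_path_restrict[OF J])
  then have "st_path (set es \<union> A \<union> {x}) I s t ?Q"
    using j hd unfolding st_path_def by (cases vs) auto
  moreover have "x \<in> path_edges ?Q" by (simp add: path_edges_def)
  moreover have "0 < length (take j es)" using j L by simp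
  then have "es ! 0 \<in> path_edges ?Q" using nth_mem[of 0 "take j es"] by (simp add: path_edges_def)
  ultimately show ?thesis by blast
qed

section \<open>Linking systems\<close>

lemma system_links_st_path: "system_links H I s t R \<Longrightarrow> P \<in> R \<Longrightarrow> st_path H I s t P"
  unfolding system_links_def edge_disjoint_st_system_def by blast

lemma system_links_edge_disjoint:
  "system_links H I s t R \<Longrightarrow> P \<in> R \<Longrightarrow> P' \<in> R \<Longrightarrow> P \<noteq> P' \<Longrightarrow> path_edges P \<inter> path_edges P' = {}"
  unfolding system_links_def edge_disjoint_st_system_def by blast

lemma system_links_delta: "system_links H I s t R \<Longrightarrow> delta H I s \<subseteq> system_edges R"
  unfolding system_links_def by blast

lemma system_links_Diff:
  assumes R: "system_links H I s t R" and "R' \<subseteq> R" "B \<inter> system_edges R' = {}"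
    "delta H I s - B \<subseteq> system_edges R'"
  shows "system_links (H - B) I s t R'"
proof -
  have "st_path (H - B) I s t P" if P: "P \<in> R'" for P
  proof (rule st_path_restrict)
    show "st_path H I s t P"
      using system_links_st_path[OF R] \<open>R' \<subseteq> R\<close> P by blast
    then have "path_edges P \<subseteq> H" by (rule st_path_edges_subset)
    moreover have "path_edges P \<subseteq> system_edges R'" using P unfolding system_edges_def by blast
    ultimately show "path_edges P \<subseteq> H - B" using assms(3) by blast
  qed
  moreover have "\<forall>P\<in>R'. \<forall>Q\<in>R'. P \<noteq> Q \<longrightarrow> path_edges P \<inter> path_edges Q = {}"
    using system_links_edge_disjoint[OF R] \<open>R' \<subseteq> R\<close> by blast
  moreover have "delta (H - B) I s \<subseteq> system_edges R'"
    using assms(4) unfolding delta_def by blast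
  ultimately show ?thesis unfolding system_links_def edge_disjoint_st_system_def by blast
qed

lemma system_links_remove_path:
  assumes R: "system_links H I s t R" and "Q \<in> R"
  shows "system_links (H - path_edges Q) I s t (R - {Q})"
proof (rule system_links_Diff[OF R])
  show "path_edges Q \<inter> system_edges (R - {Q}) = {}"
    using system_links_edge_disjoint[OF R \<open>Q \<in> R\<close>] unfolding system_edges_def by blast
  show "delta H I s - path_edges Q \<subseteq> system_edges (R - {Q})"
    using system_links_delta[OF R] unfolding system_edges_def by blast
qed blast

lemma system_links_reroute:
  assumes R: "system_links H I s t R" and Q: "(vs, es) \<in> R"
    and Q': "path_edges Q' \<subseteq> set es \<union> (H - system_edges R)" "es ! 0 \<in> path_edges Q'"
  shows "system_links (H - path_edges Q') I s t (R - {(vs, es)})"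
proof (rule system_links_Diff[OF R])
  have "set es \<inter> path_edges P = {}" if "P \<in> R" "P \<noteq> (vs, es)" for P
    using system_links_edge_disjoint[OF R Q that(1)] that(2) by (auto simp: path_edges_def)
  then have "set es \<inter> system_edges (R - {(vs, es)}) = {}" unfolding system_edges_def by blast
  moreover have "(H - system_edges R) \<inter> system_edges (R - {(vs, es)}) = {}"
    unfolding system_edges_def by blast
  ultimately show "path_edges Q' \<inter> system_edges (R - {(vs, es)}) = {}" using Q'(1) by blast
  show "delta H I s - path_edges Q' \<subseteq> system_edges (R - {(vs, es)})"
  proof
    fix f assume f: "f \<in> delta H I s - path_edges Q'"
    then obtain P where P: "P \<in> R" "f \<in> path_edges P"
      using system_links_delta[OF R] unfolding system_edges_def by blast
    have "P \<noteq> (vs, es)"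
    proof
      assume "P = (vs, es)"
      then have "f \<in> set es" using P(2) by (simp add: path_edges_def)
      moreover have "is_path H I (vs, es)" "hd vs = s"
        using system_links_st_path[OF R Q] unfolding st_path_def by auto
      moreover have "s \<in> I f" using f unfolding delta_def by blast
      ultimately have "f = es ! 0" using is_path_edge_at_hd by metis
      then show False using f Q'(2) by blast
    qed
    then show "f \<in> system_edges (R - {(vs, es)})" using P unfolding system_edges_def by blast
  qed
qed blast

section \<open>Absorbing one edge\<close>

lemma absorb_edge_by_cycle:
  assumes R: "system_links H I s t R" and x: "x \<in> H - system_edges R" "I x = {u, t}" "u \<noteq> t"
    and t: "t \<in> reach (H - system_edges R - {x}) I u"
  shows "\<exists>c. is_cycle H I c \<and> x \<in> c \<and> c \<inter> delta H I s = {} \<and> is_linked (H - c) I s t"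
proof -
  let ?A = "H - system_edges R - {x}"
  obtain ws fs where W: "is_path ?A I (ws, fs)" "hd ws = t" "last ws = u"
    using t unfolding reach_def by blast
  have "x \<notin> set fs" using path_edges_subset[OF W(1)] unfolding path_edges_def by auto
  then have cyc: "is_cycle (?A \<union> {x}) I (insert x (set fs))"
    using is_cycle_close_path[OF W x(3) _ x(2)] by blast
  have sub: "insert x (set fs) \<subseteq> H - system_edges R" using is_cycle_subset[OF cyc] x(1) by blast
  have Rs: "delta H I s \<subseteq> system_edges R" by (rule system_links_delta[OF R])
  have "system_links (H - insert x (set fs)) I s t R"
    using sub Rs by (intro system_links_Diff[OF R]) auto
  then have "is_linked (H - insert x (set fs)) I s t" unfolding is_linked_def by blast
  moreover have "is_cycle H I (insert x (set fs))" using is_cycle_restrict[OF cyc] sub by blast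
  moreover have "insert x (set fs) \<inter> delta H I s = {}" using sub Rs by blast
  ultimately show ?thesis by blast
qed

lemma absorb_edge_by_rerouting:
  assumes mg: "multigraph V H I" and ie: "inner_eulerian V H I s t"
    and R: "system_links H I s t R"
    and x: "x \<in> H - system_edges R" "I x = {u, t}" "u \<in> V" "u \<noteq> s"
    and t: "t \<notin> reach (H - system_edges R - {x}) I u"
  shows "\<exists>Q. st_path H I s t Q \<and> x \<in> path_edges Q \<and> is_linked (H - path_edges Q) I s t"
proof -
  let ?A = "H - system_edges R - {x}"
  let ?X = "reach ?A I u"
  have Rs: "delta H I s \<subseteq> system_edges R" by (rule system_links_delta[OF R])
  have mgA: "multigraph V ?A I" using mg unfolding multigraph_def by blast
  have "delta ?A I s = {}" using Rs unfolding delta_def by blast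
  then have "s \<notin> ?X" using reach_delta[of s ?A I u] x(4) by blast
  then have XV: "?X \<subseteq> V - {s, t}" using reach_subset[OF mgA x(3)] t by blast
  obtain e where e: "e \<in> system_edges R" "card (I e \<inter> ?X) = 1"
    using reach_crossed[OF mg ie x(1,2) XV] by blast
  then obtain vs es where Q: "(vs, es) \<in> R" "e \<in> set es"
    unfolding system_edges_def path_edges_def by force
  have Qst: "st_path H I s t (vs, es)" by (rule system_links_st_path[OF R Q(1)])
  then have Qpath: "is_path H I (vs, es)" unfolding st_path_def by blast
  obtain v where v: "v \<in> set vs" "v \<in> ?X" using is_path_vertex_in_cut[OF Qpath Q(2) e(2)] by blast
  obtain Q' where Q': "st_path (set es \<union> ?A \<union> {x}) I s t Q'" "x \<in> path_edges Q'" "es ! 0 \<in> path_edges Q'"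
    using st_path_reroute[OF Qst \<open>s \<notin> ?X\<close> t v x(2)] by blast
  have "set es \<subseteq> H" using st_path_edges_subset[OF Qst] by (simp add: path_edges_def)
  then have Q'H: "path_edges Q' \<subseteq> set es \<union> (H - system_edges R)"
    using st_path_edges_subset[OF Q'(1)] x(1) by blast
  have "st_path H I s t Q'" using Q'H \<open>set es \<subseteq> H\<close> by (intro st_path_restrict[OF Q'(1)]) blast
  moreover have "is_linked (H - path_edges Q') I s t"
    using system_links_reroute[OF R Q(1) Q'H Q'(3)] unfolding is_linked_def by blast
  ultimately show ?thesis using Q'(2) by blast
qed

lemma absorb_edge:
  assumes mg: "multigraph V H I" and "s \<noteq> t" and ie: "inner_eulerian V H I s t"
    and linked: "is_linked H I s t" and x: "x \<in> H" "s \<in> I x \<or> t \<in> I x"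
  shows "(\<exists>Q. st_path H I s t Q \<and> x \<in> path_edges Q \<and> is_linked (H - path_edges Q) I s t) \<or>
    (s \<notin> I x \<and> (\<exists>c. is_cycle H I c \<and> x \<in> c \<and> c \<inter> delta H I s = {} \<and> is_linked (H - c) I s t))"
proof -
  obtain R where R: "system_links H I s t R" using linked unfolding is_linked_def by blast
  show ?thesis
  proof (cases "x \<in> system_edges R")
    case True
    then obtain Q where Q: "Q \<in> R" "x \<in> path_edges Q" unfolding system_edges_def by blast
    have "is_linked (H - path_edges Q) I s t"
      using system_links_remove_path[OF R Q(1)] unfolding is_linked_def by blast
    then show ?thesis using system_links_st_path[OF R Q(1)] Q(2) by blast
  next
    case False
    have "s \<notin> I x" using False x(1) system_links_delta[OF R] unfolding delta_def by blast
    then have "t \<in> I x" using x(2) by blast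
    then obtain u where u: "I x = {u, t}" "u \<noteq> t" "u \<in> V"
      using multigraph_other_end[OF mg x(1)] by blast
    then have "u \<noteq> s" using \<open>s \<notin> I x\<close> by blast
    have xR: "x \<in> H - system_edges R" using False x(1) by blast
    show ?thesis
    proof (cases "t \<in> reach (H - system_edges R - {x}) I u")
      case True
      with absorb_edge_by_cycle[OF R xR u(1,2)] \<open>s \<notin> I x\<close> show ?thesis by blast
    next
      case False
      with absorb_edge_by_rerouting[OF mg ie R xR u(1,3) \<open>u \<noteq> s\<close>] show ?thesis by blast
    qed
  qed
qed

section \<open>Growing the paths and cycles\<close>

definition path_cycle_packing ::
  "'e set \<Rightarrow> ('e \<Rightarrow> 'v set) \<Rightarrow> 'v \<Rightarrow> 'v \<Rightarrow> ('v list \<times> 'e list) set \<Rightarrow> 'e set set \<Rightarrow> bool" where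
  "path_cycle_packing E I s t F C \<longleftrightarrow>
     edge_disjoint_st_system E I s t F \<and>
     (\<forall>c\<in>C. is_cycle E I c \<and> c \<inter> delta E I s = {}) \<and>
     (\<forall>c\<in>C. \<forall>d\<in>C. c \<noteq> d \<longrightarrow> c \<inter> d = {}) \<and>
     system_edges F \<inter> \<Union>C = {}"

lemma path_cycle_packingD:
  assumes "path_cycle_packing E I s t F C"
  shows path_cycle_packing_st_system: "edge_disjoint_st_system E I s t F"
    and path_cycle_packing_cycle: "c \<in> C \<Longrightarrow> is_cycle E I c \<and> c \<inter> delta E I s = {}"
    and path_cycle_packing_cycles_disjoint: "c \<in> C \<Longrightarrow> d \<in> C \<Longrightarrow> c \<noteq> d \<Longrightarrow> c \<inter> d = {}"
    and path_cycle_packing_path_cycle_disjoint: "P \<in> F \<Longrightarrow> c \<in> C \<Longrightarrow> path_edges P \<inter> c = {}"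
  using assms unfolding path_cycle_packing_def system_edges_def by auto

definition residual :: "'e set \<Rightarrow> ('v list \<times> 'e list) set \<Rightarrow> 'e set set \<Rightarrow> 'e set" where
  "residual E F C = E - (system_edges F \<union> \<Union>C)"

definition extendable ::
  "'v set \<Rightarrow> 'e set \<Rightarrow> ('e \<Rightarrow> 'v set) \<Rightarrow> 'v \<Rightarrow> 'v \<Rightarrow> ('v list \<times> 'e list) set \<Rightarrow> 'e set set \<Rightarrow> bool" where
  "extendable V E I s t F C \<longleftrightarrow> path_cycle_packing E I s t F C \<and>
     inner_eulerian V (residual E F C) I s t \<and> is_linked (residual E F C) I s t"

definition absorbs ::
  "'e set \<Rightarrow> ('e \<Rightarrow> 'v set) \<Rightarrow> 'v \<Rightarrow> 'v \<Rightarrow> ('v list \<times> 'e list) set \<Rightarrow> 'e set set \<Rightarrow> 'e \<Rightarrow> bool" where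
  "absorbs E I s t F C x \<longleftrightarrow>
     (x \<in> delta E I s \<longrightarrow> x \<in> system_edges F) \<and> (x \<in> delta E I t \<longrightarrow> x \<in> system_edges F \<union> \<Union>C)"

lemma path_cycle_packing_insert_path:
  assumes packing: "path_cycle_packing E I s t F C" and Q: "st_path E I s t Q"
    and new: "path_edges Q \<inter> (system_edges F \<union> \<Union>C) = {}"
  shows "path_cycle_packing E I s t (insert Q F) C"
proof -
  have "path_edges Q \<inter> path_edges P = {}" "path_edges P \<inter> path_edges Q = {}" if "P \<in> F" for P
    using new that unfolding system_edges_def by blast+
  then have "edge_disjoint_st_system E I s t (insert Q F)"
    using packing Q unfolding path_cycle_packing_def edge_disjoint_st_system_def by auto
  moreover have "system_edges (insert Q F) \<inter> \<Union>C = {}"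
    using packing new unfolding path_cycle_packing_def system_edges_def by auto
  ultimately show ?thesis using packing unfolding path_cycle_packing_def by simp
qed

lemma path_cycle_packing_insert_cycle:
  assumes packing: "path_cycle_packing E I s t F C"
    and c: "is_cycle E I c" "c \<inter> delta E I s = {}"
    and new: "c \<inter> (system_edges F \<union> \<Union>C) = {}"
  shows "path_cycle_packing E I s t F (insert c C)"
proof -
  have "c \<inter> d = {}" "d \<inter> c = {}" if "d \<in> C" for d
    using new that by blast+
  then have "\<forall>d\<in>insert c C. \<forall>d'\<in>insert c C. d \<noteq> d' \<longrightarrow> d \<inter> d' = {}"
    using packing unfolding path_cycle_packing_def by auto
  moreover have "system_edges F \<inter> \<Union>(insert c C) = {}"
    using packing new unfolding path_cycle_packing_def by auto
  ultimately show ?thesis using packing c unfolding path_cycle_packing_def by simp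
qed

lemma extendable_empty:
  "inner_eulerian V E I s t \<Longrightarrow> is_linked E I s t \<Longrightarrow> extendable V E I s t {} {}"
  unfolding extendable_def path_cycle_packing_def edge_disjoint_st_system_def residual_def
    system_edges_def by simp

lemma extendable_insert_path:
  assumes ext: "extendable V E I s t F C"
    and Q: "st_path (residual E F C) I s t Q"
    and linked: "is_linked (residual E F C - path_edges Q) I s t"
  shows "extendable V E I s t (insert Q F) C"
proof -
  have QH: "path_edges Q \<subseteq> residual E F C" using Q by (rule st_path_edges_subset)
  then have "path_edges Q \<subseteq> E" unfolding residual_def by blast
  then have "st_path E I s t Q" by (rule st_path_restrict[OF Q])
  then have "path_cycle_packing E I s t (insert Q F) C"
    using ext QH by (intro path_cycle_packing_insert_path) (auto simp: extendable_def residual_def)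
  moreover have "residual E (insert Q F) C = residual E F C - path_edges Q"
    unfolding residual_def system_edges_def by auto
  moreover have "inner_eulerian V (residual E F C - path_edges Q) I s t"
    using ext QH st_path_even_cut[OF Q] by (rule_tac inner_eulerian_Diff) (auto simp: extendable_def)
  ultimately show ?thesis using linked unfolding extendable_def by simp
qed

lemma extendable_insert_cycle:
  assumes ext: "extendable V E I s t F C"
    and c: "is_cycle (residual E F C) I c" "c \<inter> delta (residual E F C) I s = {}"
    and linked: "is_linked (residual E F C - c) I s t"
  shows "extendable V E I s t F (insert c C)"
proof -
  have cH: "c \<subseteq> residual E F C" using c(1) by (rule is_cycle_subset)
  then have "is_cycle E I c" "c \<inter> delta E I s = {}"
    using is_cycle_restrict[OF c(1)] c(2) unfolding residual_def delta_def by blast+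
  then have "path_cycle_packing E I s t F (insert c C)"
    using ext cH by (intro path_cycle_packing_insert_cycle) (auto simp: extendable_def residual_def)
  moreover have "residual E F (insert c C) = residual E F C - c"
    unfolding residual_def by auto
  moreover have "inner_eulerian V (residual E F C - c) I s t"
    using ext cH is_cycle_even_cut[OF c(1)] by (rule_tac inner_eulerian_Diff) (auto simp: extendable_def)
  ultimately show ?thesis using linked unfolding extendable_def by simp
qed

lemma extendable_absorb:
  assumes mg: "multigraph V E I" and "s \<noteq> t" and ext: "extendable V E I s t F C"
  obtains F' C' where "extendable V E I s t F' C'" "F \<subseteq> F'" "C \<subseteq> C'" "absorbs E I s t F' C' x"
proof (cases "x \<in> residual E F C \<and> (s \<in> I x \<or> t \<in> I x)")
  case False
  have packing: "path_cycle_packing E I s t F C" using ext by (simp add: extendable_def)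
  have "x \<notin> \<Union>C" if "x \<in> delta E I s" using path_cycle_packing_cycle[OF packing] that by blast
  then have "absorbs E I s t F C x" using False unfolding absorbs_def residual_def delta_def by blast
  then show ?thesis using that ext by blast
next
  case True
  let ?H = "residual E F C"
  have "multigraph V ?H I" using mg unfolding multigraph_def residual_def by blast
  moreover have "inner_eulerian V ?H I s t" "is_linked ?H I s t" using ext by (simp_all add: extendable_def)
  ultimately consider
      Q where "st_path ?H I s t Q" "x \<in> path_edges Q" "is_linked (?H - path_edges Q) I s t"
    | c where "s \<notin> I x" "is_cycle ?H I c" "x \<in> c" "c \<inter> delta ?H I s = {}" "is_linked (?H - c) I s t"
    using absorb_edge[of V ?H I s t x] True \<open>s \<noteq> t\<close> by blast
  then show ?thesis
  proof cases
    case 1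
    then have "absorbs E I s t (insert Q F) C x" unfolding absorbs_def system_edges_def by blast
    then show ?thesis using that extendable_insert_path[OF ext 1(1,3)] by blast
  next
    case 2
    then have "absorbs E I s t F (insert c C) x" unfolding absorbs_def delta_def by blast
    then show ?thesis using that extendable_insert_cycle[OF ext 2(2,4,5)] by blast
  qed
qed

lemma absorbs_mono:
  "absorbs E I s t F C x \<Longrightarrow> F \<subseteq> F' \<Longrightarrow> C \<subseteq> C' \<Longrightarrow> absorbs E I s t F' C' x"
  unfolding absorbs_def system_edges_def by blast

lemma extendable_chain:
  assumes "multigraph V E I" "s \<noteq> t" "inner_eulerian V E I s t" "is_linked E I s t"
  obtains F C where "\<And>n. extendable V E I s t (F n) (C n)" "mono F" "mono C"
    "\<And>n. absorbs E I s t (F (Suc n)) (C (Suc n)) (x n)"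
proof -
  let ?P = "\<lambda>_ FC. extendable V E I s t (fst FC) (snd FC)"
  let ?Q = "\<lambda>n FC FC'. fst FC \<subseteq> fst FC' \<and> snd FC \<subseteq> snd FC' \<and> absorbs E I s t (fst FC') (snd FC') (x n)"
  have "\<exists>S. \<forall>n. ?P n (S n) \<and> ?Q n (S n) (S (Suc n))"
  proof (rule dependent_nat_choice)
    show "\<exists>FC. ?P 0 FC" using extendable_empty[OF assms(3,4)] by auto
  next
    fix FC n assume "?P n FC"
    then obtain F' C' where "extendable V E I s t F' C'" "?Q n FC (F', C')"
      using extendable_absorb[OF assms(1,2)] by (metis fst_conv snd_conv)
    then show "\<exists>FC'. ?P (Suc n) FC' \<and> ?Q n FC FC'" by auto
  qed
  then obtain S where S: "\<And>n. ?P n (S n) \<and> ?Q n (S n) (S (Suc n))" by blast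
  show ?thesis
  proof (rule that[of "\<lambda>n. fst (S n)" "\<lambda>n. snd (S n)"])
    show "mono (\<lambda>n. fst (S n))" "mono (\<lambda>n. snd (S n))"
      using S by (simp_all add: mono_iff_le_Suc)
  qed (use S in simp_all)
qed

lemma mono_UN_common:
  fixes A :: "nat \<Rightarrow> 'a set" and B :: "nat \<Rightarrow> 'b set"
  assumes "mono A" "mono B" "a \<in> (\<Union>n. A n)" "b \<in> (\<Union>n. B n)"
  obtains k where "a \<in> A k" "b \<in> B k"
proof -
  obtain m n where "a \<in> A m" "b \<in> B n" using assms(3,4) by blast
  moreover have "A m \<subseteq> A (max m n)" by (rule monoD[OF assms(1)]) simp
  moreover have "B n \<subseteq> B (max m n)" by (rule monoD[OF assms(2)]) simp
  ultimately show ?thesis using that by blast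
qed

lemma path_cycle_packing_UN:
  fixes F :: "nat \<Rightarrow> ('v list \<times> 'e list) set" and C :: "nat \<Rightarrow> 'e set set"
  assumes packing: "\<And>n. path_cycle_packing E I s t (F n) (C n)" and F: "mono F" and C: "mono C"
  shows "path_cycle_packing E I s t (\<Union>n. F n) (\<Union>n. C n)"
proof -
  note paths = path_cycle_packing_st_system[OF packing, unfolded edge_disjoint_st_system_def]
  have "\<forall>P\<in>(\<Union>n. F n). st_path E I s t P" using paths by blast
  moreover have "\<forall>P\<in>(\<Union>n. F n). \<forall>Q\<in>(\<Union>n. F n). P \<noteq> Q \<longrightarrow> path_edges P \<inter> path_edges Q = {}"
  proof (intro ballI impI)
    fix P Q assume PQ: "P \<in> (\<Union>n. F n)" "Q \<in> (\<Union>n. F n)" "P \<noteq> Q"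
    obtain k where "P \<in> F k" "Q \<in> F k" using mono_UN_common[OF F F PQ(1,2)] .
    then show "path_edges P \<inter> path_edges Q = {}" using paths[of k] \<open>P \<noteq> Q\<close> by blast
  qed
  moreover have "\<forall>c\<in>(\<Union>n. C n). is_cycle E I c \<and> c \<inter> delta E I s = {}"
    using path_cycle_packing_cycle[OF packing] by blast
  moreover have "\<forall>c\<in>(\<Union>n. C n). \<forall>d\<in>(\<Union>n. C n). c \<noteq> d \<longrightarrow> c \<inter> d = {}"
  proof (intro ballI impI)
    fix c d assume cd: "c \<in> (\<Union>n. C n)" "d \<in> (\<Union>n. C n)" "c \<noteq> d"
    obtain k where "c \<in> C k" "d \<in> C k" using mono_UN_common[OF C C cd(1,2)] .
    then show "c \<inter> d = {}" using path_cycle_packing_cycles_disjoint[OF packing] \<open>c \<noteq> d\<close> by blast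
  qed
  moreover have "system_edges (\<Union>n. F n) \<inter> \<Union>(\<Union>n. C n) = {}"
  proof -
    have "path_edges P \<inter> c = {}" if Pc: "P \<in> (\<Union>n. F n)" "c \<in> (\<Union>n. C n)" for P c
    proof -
      obtain k where "P \<in> F k" "c \<in> C k" using mono_UN_common[OF F C Pc] .
      then show ?thesis by (rule path_cycle_packing_path_cycle_disjoint[OF packing])
    qed
    then show ?thesis unfolding system_edges_def by blast
  qed
  ultimately show ?thesis unfolding path_cycle_packing_def edge_disjoint_st_system_def by (intro conjI)
qed

lemma path_cycle_packing_linkage:
  assumes packing: "path_cycle_packing E I s t F C" and "s \<noteq> t" and s: "delta E I s \<subseteq> system_edges F"
  shows "linkage E I s t F"
proof -
  have sys: "edge_disjoint_st_system E I s t F" by (rule path_cycle_packing_st_system[OF packing])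
  have "path_edges P \<inter> delta E I s \<noteq> {}" if "P \<in> F" for P
  proof (rule st_path_meets_delta)
    show "st_path E I s t P" using sys that unfolding edge_disjoint_st_system_def by blast
  qed fact
  then show ?thesis using sys s unfolding linkage_def system_links_def by blast
qed

lemma path_cycle_packing_cycles:
  assumes packing: "path_cycle_packing E I s t F C" and "c \<in> C"
  shows "is_cycle (E - system_edges F) I c"
proof -
  have cyc: "is_cycle E I c" using path_cycle_packing_cycle[OF packing \<open>c \<in> C\<close>] by blast
  have "path_edges P \<inter> c = {}" if "P \<in> F" for P
    by (rule path_cycle_packing_path_cycle_disjoint[OF packing that \<open>c \<in> C\<close>])
  then have "c \<subseteq> E - system_edges F" using is_cycle_subset[OF cyc] unfolding system_edges_def by blast
  then show ?thesis by (rule is_cycle_restrict[OF cyc])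
qed

lemma absorbing_path_cycle_packing:
  fixes x :: "nat \<Rightarrow> 'e"
  assumes "multigraph V E I" "s \<noteq> t" "inner_eulerian V E I s t" "is_linked E I s t"
  obtains F C where "path_cycle_packing E I s t F C" "\<And>n. absorbs E I s t F C (x n)"
proof -
  obtain F C where ext: "\<And>n. extendable V E I s t (F n) (C n)" and mono: "mono F" "mono C"
    and absorbs: "\<And>n. absorbs E I s t (F (Suc n)) (C (Suc n)) (x n)"
    by (rule extendable_chain[OF assms, where x = x]) blast
  have "path_cycle_packing E I s t (\<Union>n. F n) (\<Union>n. C n)"
    using ext extendable_def path_cycle_packing_UN mono by metis
  moreover have "absorbs E I s t (\<Union>n. F n) (\<Union>n. C n) (x n)" for n
    by (rule absorbs_mono[OF absorbs[of n]]) blast+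
  ultimately show ?thesis using that by blast
qed

lemma absorbing_path_cycle_packing_solution:
  assumes packing: "path_cycle_packing E I s t F C" and "s \<noteq> t"
    and absorbed: "\<And>e. e \<in> E \<Longrightarrow> absorbs E I s t F C e"
  shows "linkage E I s t F \<and> (\<forall>c\<in>C. is_cycle (E - system_edges F) I c) \<and>
    (\<forall>c\<in>C. \<forall>d\<in>C. c \<noteq> d \<longrightarrow> c \<inter> d = {}) \<and> delta (E - system_edges F) I t \<subseteq> \<Union>C"
proof (intro conjI ballI impI)
  have "delta E I s \<subseteq> system_edges F"
    using absorbed unfolding absorbs_def delta_def by blast
  then show "linkage E I s t F" by (rule path_cycle_packing_linkage[OF packing \<open>s \<noteq> t\<close>])
  show "delta (E - system_edges F) I t \<subseteq> \<Union>C"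
    using absorbed unfolding absorbs_def delta_def by blast
next
  fix c assume "c \<in> C"
  then show "is_cycle (E - system_edges F) I c" by (rule path_cycle_packing_cycles[OF packing])
next
  fix c d assume "c \<in> C" "d \<in> C" "c \<noteq> d"
  then show "c \<inter> d = {}" by (rule path_cycle_packing_cycles_disjoint[OF packing])
qed

theorem lemma6p2:
  fixes V :: "'v set" and E :: "'e set" and I :: "'e \<Rightarrow> 'v set" and s t :: 'v
  assumes "multigraph V E I"
    and "s \<in> V" and "t \<in> V" and "s \<noteq> t"
    and "inner_eulerian V E I s t"
    and "countable E"
    and "is_linked E I s t"
  shows "\<exists>\<P>. linkage E I s t \<P> \<and>
           (\<exists>\<C>. (\<forall>C\<in>\<C>. is_cycle (E - system_edges \<P>) I C) \<and>
                 (\<forall>C\<in>\<C>. \<forall>D\<in>\<C>. C \<noteq> D \<longrightarrow> C \<inter> D = {}) \<and>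
                 delta (E - system_edges \<P>) I t \<subseteq> \<Union>\<C>)"
proof -
  obtain \<P> \<C> where packing: "path_cycle_packing E I s t \<P> \<C>"
    and absorbs: "\<And>n. absorbs E I s t \<P> \<C> (from_nat_into E n)"
    by (rule absorbing_path_cycle_packing[OF assms(1,4,5,7), where x = "from_nat_into E"]) blast
  have "absorbs E I s t \<P> \<C> e" if e: "e \<in> E" for e
  proof -
    obtain n where "from_nat_into E n = e" using from_nat_into_surj[OF assms(6) e] by blast
    then show ?thesis using absorbs[of n] by simp
  qed
  then have "linkage E I s t \<P> \<and> (\<forall>C\<in>\<C>. is_cycle (E - system_edges \<P>) I C) \<and>
      (\<forall>C\<in>\<C>. \<forall>D\<in>\<C>. C \<noteq> D \<longrightarrow> C \<inter> D = {}) \<and> delta (E - system_edges \<P>) I t \<subseteq> \<Union>\<C>"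
    by (rule absorbing_path_cycle_packing_solution[OF packing assms(4)])
  then show ?thesis by (intro exI[of _ \<P>] conjI exI[of _ \<C>]) simp_all
qed

end
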